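(* Let the premiums $\{X_n, n\geq 1\}$, the claims $\{Y_n, n\geq 1\}$ and the rates of interest $\{I_n, n\geq 1\}$ be mutually independent sequences of nonnegative i.i.d. random variables with finite expectations. For $u\geq 0$ define $U_0=u$, $U_n=U_{n-1}(1+I_n)+X_n-Y_n$ for $n\geq 1$, and $\Psi(u)=\mathbb{P}\big(\bigcup_{n=1}^\infty\{U_n<0\}\big)$. Let $$S_n=\sum_{i=1}^n\Big(\big(Y_i-X_i\big)\prod_{j=1}^{i-1}(1+I_j)^{-1}\Big),\quad n\geq 1,$$ with the empty product equal to $1$. If there exists a positive real number $R$ satisfying $$\mathbb{E}\Big(e^{R\left(Y_1-X_1\right)}\Big)\leq 1,$$ then $\{Z_n=e^{RS_n}, n\geq 1\}$ is a supermartingale (i.e. $\mathbb{E}(Z_{n+1}\mid Z_1,\dots,Z_n)\leq Z_n$ a.s. for all $n$), and $\Psi(u)\leq e^{-Ru}$ for all $u>0$. *)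

theory Defs
  imports "HOL-Probability.Probability"
begin

fun surplus :: "real \<Rightarrow> (nat \<Rightarrow> 'a \<Rightarrow> real) \<Rightarrow> (nat \<Rightarrow> 'a \<Rightarrow> real) \<Rightarrow> (nat \<Rightarrow> 'a \<Rightarrow> real)
                 \<Rightarrow> nat \<Rightarrow> 'a \<Rightarrow> real" where
  "surplus u X Y I 0 \<omega> = u"
| "surplus u X Y I (Suc n) \<omega> = surplus u X Y I n \<omega> * (1 + I (Suc n) \<omega>) + X (Suc n) \<omega> - Y (Suc n) \<omega>"

definition ruin_prob :: "'a measure \<Rightarrow> (nat \<Rightarrow> 'a \<Rightarrow> real) \<Rightarrow> (nat \<Rightarrow> 'a \<Rightarrow> real)
                 \<Rightarrow> (nat \<Rightarrow> 'a \<Rightarrow> real) \<Rightarrow> real \<Rightarrow> real" where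
  "ruin_prob M X Y I u = measure M (\<Union>n\<in>{1..}. {\<omega> \<in> space M. surplus u X Y I n \<omega> < 0})"

definition disc_loss :: "(nat \<Rightarrow> 'a \<Rightarrow> real) \<Rightarrow> (nat \<Rightarrow> 'a \<Rightarrow> real) \<Rightarrow> (nat \<Rightarrow> 'a \<Rightarrow> real)
                 \<Rightarrow> nat \<Rightarrow> 'a \<Rightarrow> real" where
  "disc_loss X Y I n \<omega> = (\<Sum>i\<in>{1..n}. (Y i \<omega> - X i \<omega>) * (\<Prod>j\<in>{1..<i}. inverse (1 + I j \<omega>)))"

definition natural_filtration :: "'a measure \<Rightarrow> (nat \<Rightarrow> 'a \<Rightarrow> real) \<Rightarrow> nat \<Rightarrow> 'a measure" where
  "natural_filtration M Z n =
     sigma (space M) {Z i -` A \<inter> space M | i A. 1 \<le> i \<and> i \<le> n \<and> A \<in> sets borel}"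

definition supermartingale :: "'a measure \<Rightarrow> (nat \<Rightarrow> 'a \<Rightarrow> real) \<Rightarrow> bool" where
  "supermartingale M Z \<longleftrightarrow>
     (\<forall>n\<ge>1. Z n \<in> borel_measurable M \<and> integrable M (Z n)) \<and>
     (\<forall>n\<ge>1. AE \<omega> in M. real_cond_exp M (natural_filtration M Z n) (Z (Suc n)) \<omega> \<le> Z n \<omega>)"

end

(*
  Write W_i = Y_i - X_i. Both the discounted loss S_n of the statement and the deficit
  u - U_n D_n, where D_n = prod_{j <= n} (1 + I_j)^-1, are sums sum_i c_i W_i whose weights
  c_i lie in [0, 1] and are determined by the variables observed before W_i, while W_i is
  independent of those. By convexity of exp, E exp(R c W_i) <= (1 - c) + c E exp(R W_i) <= 1
  for every c in [0, 1], so integrating out W_{n+1} first shows that exp(R sum_i c_i W_i)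
  decreases in mean on every event of the past. For S_n this is the supermartingale property;
  for the deficit, stopping at the first time it exceeds u gives exp(R u) P(ruin by time N) <= 1.
*)

theory Submission
  imports Defs
begin

lemma measurable_component_any [measurable]:
  "(\<lambda>x. x i) \<in> borel_measurable (PiM K (\<lambda>_. (borel :: real measure)))"
proof (cases "i \<in> K")
  case True
  then show ?thesis by (rule measurable_component_singleton)
next
  case False
  then have "(\<lambda>x. undefined) \<in> borel_measurable (PiM K (\<lambda>_. (borel :: real measure)))"
    by simp
  then show ?thesis
    by (rule measurable_cong[THEN iffD1, rotated]) (use False in \<open>auto simp: space_PiM PiE_def extensional_def\<close>)
qed

lemma (in prob_space) nn_integral_indep_var:
  assumes indep: "indep_var S A T B" and [measurable]: "\<phi> \<in> borel_measurable (S \<Otimes>\<^sub>M T)"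
  shows "(\<integral>\<^sup>+\<omega>. \<phi> (A \<omega>, B \<omega>) \<partial>M) = (\<integral>\<^sup>+\<omega>. \<integral>\<^sup>+\<omega>'. \<phi> (A \<omega>, B \<omega>') \<partial>M \<partial>M)"
proof -
  have [measurable]: "A \<in> measurable M S" "B \<in> measurable M T"
    and eq: "distr M S A \<Otimes>\<^sub>M distr M T B = distr M (S \<Otimes>\<^sub>M T) (\<lambda>\<omega>. (A \<omega>, B \<omega>))"
    using indep indep_var_distribution_eq by auto
  interpret DB: prob_space "distr M T B" by (rule prob_space_distr) measurable
  have "(\<integral>\<^sup>+\<omega>. \<phi> (A \<omega>, B \<omega>) \<partial>M) = (\<integral>\<^sup>+p. \<phi> p \<partial>(distr M S A \<Otimes>\<^sub>M distr M T B))"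
    by (simp add: eq nn_integral_distr)
  also have "\<dots> = (\<integral>\<^sup>+v. \<integral>\<^sup>+w. \<phi> (v, w) \<partial>distr M T B \<partial>distr M S A)"
    by (rule DB.nn_integral_fst[symmetric])
      (simp add: measurable_cong_sets[OF sets_pair_measure_cong[OF sets_distr sets_distr] refl])
  also have "\<dots> = (\<integral>\<^sup>+\<omega>. \<integral>\<^sup>+\<omega>'. \<phi> (A \<omega>, B \<omega>') \<partial>M \<partial>M)"
    by (simp add: nn_integral_distr) (intro nn_integral_cong nn_integral_distr; simp add: measurable_space)
  finally show ?thesis .
qed

lemma (in prob_space) nn_integral_indep_var_cong:
  assumes "indep_var S X T Y" and "indep_var S X' T Y'"
    and "distr M S X = distr M S X'" and "distr M T Y = distr M T Y'"
    and [measurable]: "\<phi> \<in> borel_measurable (S \<Otimes>\<^sub>M T)"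
  shows "(\<integral>\<^sup>+\<omega>. \<phi> (X \<omega>, Y \<omega>) \<partial>M) = (\<integral>\<^sup>+\<omega>. \<phi> (X' \<omega>, Y' \<omega>) \<partial>M)"
proof -
  have [measurable]: "X \<in> measurable M S" "Y \<in> measurable M T" "X' \<in> measurable M S" "Y' \<in> measurable M T"
    using assms(1,2) by (auto dest: indep_var_rv1 indep_var_rv2)
  have "distr M (S \<Otimes>\<^sub>M T) (\<lambda>\<omega>. (X \<omega>, Y \<omega>)) = distr M (S \<Otimes>\<^sub>M T) (\<lambda>\<omega>. (X' \<omega>, Y' \<omega>))"
    using assms(1-4) by (simp add: indep_var_distribution_eq)
  then have "(\<integral>\<^sup>+p. \<phi> p \<partial>distr M (S \<Otimes>\<^sub>M T) (\<lambda>\<omega>. (X \<omega>, Y \<omega>)))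
      = (\<integral>\<^sup>+p. \<phi> p \<partial>distr M (S \<Otimes>\<^sub>M T) (\<lambda>\<omega>. (X' \<omega>, Y' \<omega>)))"
    by simp
  then show ?thesis
    by (simp add: nn_integral_distr)
qed

lemma (in prob_space) nn_integral_exp_scaled_le_1:
  fixes W :: "'a \<Rightarrow> real"
  assumes [measurable]: "W \<in> borel_measurable M"
    and W: "(\<integral>\<^sup>+\<omega>. ennreal (exp (W \<omega>)) \<partial>M) \<le> 1" and c: "0 \<le> c" "c \<le> 1"
  shows "(\<integral>\<^sup>+\<omega>. ennreal (exp (c * W \<omega>)) \<partial>M) \<le> 1"
proof -
  have convex: "exp (c * w) \<le> (1 - c) + c * exp w" for w
    using convex_onD[OF exp_convex c, of 0 w] by (simp add: algebra_simps)
  have "(\<integral>\<^sup>+\<omega>. ennreal (exp (c * W \<omega>)) \<partial>M)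
      \<le> (\<integral>\<^sup>+\<omega>. ennreal (1 - c) + ennreal c * ennreal (exp (W \<omega>)) \<partial>M)"
    using c by (intro nn_integral_mono)
      (simp add: ennreal_mult'[symmetric] ennreal_plus[symmetric] convex del: ennreal_plus)
  also have "\<dots> = ennreal (1 - c) + ennreal c * (\<integral>\<^sup>+\<omega>. ennreal (exp (W \<omega>)) \<partial>M)"
    by (simp add: nn_integral_add nn_integral_cmult emeasure_space_1)
  also have "\<dots> \<le> ennreal (1 - c) + ennreal c * 1"
    by (intro add_left_mono mult_left_mono W) auto
  also have "\<dots> = 1"
    using c by (simp add: ennreal_plus[symmetric] del: ennreal_plus)
  finally show ?thesis .
qed

lemma (in sigma_finite_subalgebra) real_cond_exp_le_of_set_integral_le:
  assumes [measurable]: "integrable M f" "integrable M g" "g \<in> borel_measurable F"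
    and le: "\<And>A. A \<in> sets F \<Longrightarrow> (\<integral>x\<in>A. f x \<partial>M) \<le> (\<integral>x\<in>A. g x \<partial>M)"
  shows "AE x in M. real_cond_exp M F f x \<le> g x"
proof -
  let ?MF = "restr_to_subalg M F"
  let ?d = "\<lambda>x. g x - real_cond_exp M F f x"
  have cond_int: "integrable M (real_cond_exp M F f)"
    by (rule real_cond_exp_int(1)) fact
  then have d_F: "integrable M ?d" "?d \<in> borel_measurable F"
    using assms(2) by auto
  have "AE x in ?MF. 0 \<le> ?d x"
  proof (rule sigma_finite_measure.density_nonneg[OF sigma_fin_subalg])
    show "integrable ?MF ?d"
      using d_F by (simp add: integrable_in_subalg[OF subalg])
  next
    fix A assume "A \<in> sets ?MF"
    then have A: "A \<in> sets F" by (simp add: sets_restr_to_subalg[OF subalg])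
    then have "A \<in> sets M" using subalg by (auto simp: subalgebra_def)
    have "(\<integral>x\<in>A. ?d x \<partial>?MF) = (\<integral>x\<in>A. ?d x \<partial>M)"
      using A d_F unfolding set_lebesgue_integral_def by (simp add: integral_subalgebra2 subalg)
    also have "\<dots> = (\<integral>x\<in>A. g x \<partial>M) - (\<integral>x\<in>A. real_cond_exp M F f x \<partial>M)"
      using integrable_mult_indicator[OF \<open>A \<in> sets M\<close> cond_int]
        integrable_mult_indicator[OF \<open>A \<in> sets M\<close> assms(2)]
      by (intro set_integral_diff) (auto simp: set_integrable_def)
    also have "\<dots> = (\<integral>x\<in>A. g x \<partial>M) - (\<integral>x\<in>A. f x \<partial>M)"
      using real_cond_exp_intA[OF assms(1) A] by simp
    finally show "0 \<le> set_lebesgue_integral ?MF A ?d"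
      using le[OF A] by simp
  qed
  then show ?thesis
    using AE_restr_to_subalg[OF subalg] by force
qed

section \<open>Natural filtrations\<close>

lemma space_natural_filtration [simp]: "space (natural_filtration M Z n) = space M"
  unfolding natural_filtration_def by (simp add: space_measure_of_conv)

lemma sets_natural_filtration:
  "sets (natural_filtration M Z n)
     = sigma_sets (space M) {Z i -` A \<inter> space M | i A. 1 \<le> i \<and> i \<le> n \<and> A \<in> sets borel}"
  unfolding natural_filtration_def by (rule sets_measure_of) auto

lemma subalgebra_natural_filtration:
  assumes "\<And>i. 1 \<le> i \<Longrightarrow> i \<le> n \<Longrightarrow> Z i \<in> borel_measurable M"
  shows "subalgebra M (natural_filtration M Z n)"
  unfolding subalgebra_def sets_natural_filtration using assms
  by (auto intro!: sets.sigma_sets_subset)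

lemma measurable_natural_filtration:
  assumes "1 \<le> n"
  shows "Z n \<in> borel_measurable (natural_filtration M Z n)"
  unfolding measurable_def sets_natural_filtration using assms by auto

lemma sets_natural_filtration_vimage:
  assumes V: "V \<in> measurable M P"
    and \<phi>: "\<And>i. 1 \<le> i \<Longrightarrow> i \<le> n \<Longrightarrow> \<phi> i \<in> borel_measurable P"
    and Z: "\<And>i \<omega>. 1 \<le> i \<Longrightarrow> i \<le> n \<Longrightarrow> \<omega> \<in> space M \<Longrightarrow> Z i \<omega> = \<phi> i (V \<omega>)"
    and A: "A \<in> sets (natural_filtration M Z n)"
  obtains B where "B \<in> sets P" and "A = V -` B \<inter> space M"
proof -
  let ?VP = "{V -` B \<inter> space M | B. B \<in> sets P}"
  have "{Z i -` C \<inter> space M | i C. 1 \<le> i \<and> i \<le> n \<and> C \<in> sets borel} \<subseteq> ?VP"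
  proof clarify
    fix i and C :: "real set"
    assume i: "1 \<le> i" "i \<le> n" and "C \<in> sets borel"
    then have "\<phi> i -` C \<inter> space P \<in> sets P"
      using measurable_sets[OF \<phi>[OF i]] by blast
    moreover have "Z i -` C \<inter> space M = V -` (\<phi> i -` C \<inter> space P) \<inter> space M"
      using Z[OF i] measurable_space[OF V] by (auto simp del: vimage_Int)
    ultimately show "\<exists>B. Z i -` C \<inter> space M = V -` B \<inter> space M \<and> B \<in> sets P"
      by blast
  qed
  then have "sets (natural_filtration M Z n) \<subseteq> sigma_sets (space M) ?VP"
    unfolding sets_natural_filtration by (rule sigma_sets_mono')
  also have "sigma_sets (space M) ?VP = ?VP"
    using sets_vimage_algebra2[of V "space M" P] V
    unfolding sets_vimage_algebra measurable_def by simp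
  finally show ?thesis
    using A that by blast
qed

section \<open>Coordinates of the model\<close>

text \<open>A coordinate vector \<open>x :: coord \<Rightarrow> real\<close> lists the values of all variables of the model:
  \<open>Inl n\<close>, \<open>Inr (Inl n)\<close> and \<open>Inr (Inr n)\<close> index \<open>X n\<close>, \<open>Y n\<close> and \<open>I n\<close>.\<close>

type_synonym coord = "nat + nat + nat"

definition all_coords :: "coord set" where
  "all_coords = {Inl n | n. n \<ge> 1} \<union> {Inr (Inl n) | n. n \<ge> 1} \<union> {Inr (Inr n) | n. n \<ge> 1}"

text \<open>The variables known before the premium and the claim of period \<open>n + 1\<close>; they include
  \<open>I (n + 1)\<close>, on which the discount of that period depends.\<close>
definition past_coords :: "nat \<Rightarrow> coord set" where
  "past_coords n = {Inl i | i. 1 \<le> i \<and> i \<le> n} \<union> {Inr (Inl i) | i. 1 \<le> i \<and> i \<le> n}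
     \<union> {Inr (Inr i) | i. 1 \<le> i \<and> i \<le> Suc n}"

definition step_coords :: "nat \<Rightarrow> coord set" where
  "step_coords n = {Inl n, Inr (Inl n)}"

lemma (in prob_space) indep_var_premium_claim:
  assumes indep: "indep_vars (\<lambda>_. borel) (case_sum X (case_sum Y I)) all_coords" and "1 \<le> n"
  shows "indep_var borel (X n) borel (Y n)"
proof -
  let ?V = "\<lambda>K \<omega>. restrict (\<lambda>i. case_sum X (case_sum Y I) i \<omega>) K"
  have "indep_var (PiM {Inl n} (\<lambda>_. borel)) (?V {Inl n}) (PiM {Inr (Inl n)} (\<lambda>_. borel)) (?V {Inr (Inl n)})"
    by (rule indep_var_restrict[OF indep]) (use assms(2) in \<open>auto simp: all_coords_def\<close>)
  then have "indep_var borel ((\<lambda>x. x (Inl n)) \<circ> ?V {Inl n}) borel ((\<lambda>x. x (Inr (Inl n))) \<circ> ?V {Inr (Inl n)})"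
    by (rule indep_var_compose) measurable
  then show ?thesis
    by (simp add: comp_def)
qed

lemma past_coords_subset_all: "past_coords n \<subseteq> all_coords"
  by (auto simp: past_coords_def all_coords_def)

lemma step_coords_subset_all: "1 \<le> n \<Longrightarrow> step_coords n \<subseteq> all_coords"
  by (auto simp: step_coords_def all_coords_def)

lemma past_coords_disjoint_step_coords: "past_coords n \<inter> step_coords (Suc n) = {}"
  by (auto simp: past_coords_def step_coords_def)

lemma past_coords_mono: "m \<le> n \<Longrightarrow> past_coords m \<subseteq> past_coords n"
  by (auto simp: past_coords_def)

definition net_loss :: "nat \<Rightarrow> (coord \<Rightarrow> real) \<Rightarrow> real" where
  "net_loss n x = x (Inr (Inl n)) - x (Inl n)"

text \<open>Truncating the rates at \<open>0\<close> keeps the discount in \<open>(0, 1]\<close> on every coordinate vector;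
  on the model, where the rates are nonnegative, it is \<open>\<Prod>j\<in>{1..n}. inverse (1 + I j)\<close>.\<close>
definition discount :: "nat \<Rightarrow> (coord \<Rightarrow> real) \<Rightarrow> real" where
  "discount n x = (\<Prod>j\<in>{1..n}. inverse (1 + max 0 (x (Inr (Inr j)))))"

definition weighted_loss :: "(nat \<Rightarrow> (coord \<Rightarrow> real) \<Rightarrow> real) \<Rightarrow> nat \<Rightarrow> (coord \<Rightarrow> real) \<Rightarrow> real" where
  "weighted_loss c n x = (\<Sum>i\<in>{1..n}. c i x * net_loss i x)"

definition predictable_weights :: "(nat \<Rightarrow> (coord \<Rightarrow> real) \<Rightarrow> real) \<Rightarrow> bool" where
  "predictable_weights c \<longleftrightarrow> (\<forall>n.
     c (Suc n) \<in> borel_measurable (PiM (past_coords n) (\<lambda>_. borel)) \<and>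
     (\<forall>x. c (Suc n) (restrict x (past_coords n)) = c (Suc n) x) \<and>
     (\<forall>x. 0 \<le> c (Suc n) x \<and> c (Suc n) x \<le> 1))"

lemma net_loss_restrict:
  "1 \<le> n \<Longrightarrow> n \<le> N \<Longrightarrow> net_loss n (restrict x (past_coords N)) = net_loss n x"
  by (auto simp: net_loss_def past_coords_def)

lemma measurable_net_loss [measurable]: "net_loss n \<in> borel_measurable (PiM K (\<lambda>_. borel))"
  unfolding net_loss_def by measurable

lemma measurable_discount [measurable]: "discount n \<in> borel_measurable (PiM K (\<lambda>_. borel))"
  unfolding discount_def by measurable

lemma discount_pos: "0 < discount n x"
  unfolding discount_def by (intro prod_pos) (simp add: add_pos_nonneg)

lemma discount_le_1: "discount n x \<le> 1"
  unfolding discount_def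
  by (intro prod_le_1) (auto intro: inverse_le_1_iff[THEN iffD2] simp: add_pos_nonneg)

lemma discount_Suc: "discount (Suc n) x = discount n x * inverse (1 + max 0 (x (Inr (Inr (Suc n)))))"
  by (simp add: discount_def)

lemma discount_restrict: "n \<le> Suc N \<Longrightarrow> discount n (restrict x (past_coords N)) = discount n x"
  by (auto simp: discount_def past_coords_def intro!: prod.cong)

lemma predictable_weights_discount: "predictable_weights discount"
  unfolding predictable_weights_def
  by (simp add: discount_restrict discount_pos less_imp_le discount_le_1)

text \<open>\<open>weighted_loss prev_discount\<close> is the process \<open>S\<^sub>n\<close> of the statement, whereas
  ruin at time \<open>n\<close> means \<open>u < weighted_loss discount n\<close>.\<close>
definition prev_discount :: "nat \<Rightarrow> (coord \<Rightarrow> real) \<Rightarrow> real" where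
  "prev_discount n = discount (n - 1)"

lemma predictable_weights_prev_discount: "predictable_weights prev_discount"
  unfolding predictable_weights_def prev_discount_def
  by (simp add: discount_restrict discount_pos less_imp_le discount_le_1)

lemma weighted_loss_0 [simp]: "weighted_loss c 0 x = 0"
  by (simp add: weighted_loss_def)

lemma weighted_loss_Suc:
  "weighted_loss c (Suc n) x = weighted_loss c n x + c (Suc n) x * net_loss (Suc n) x"
  by (simp add: weighted_loss_def)

text \<open>\<open>stopped_exp_loss R u c N = exp (R * L (min \<tau> N))\<close>, where \<open>L = weighted_loss c\<close> and
  \<open>\<tau>\<close> is the first \<open>k \<ge> 1\<close> with \<open>u < L k\<close>.\<close>
fun stopped_exp_loss ::
  "real \<Rightarrow> real \<Rightarrow> (nat \<Rightarrow> (coord \<Rightarrow> real) \<Rightarrow> real) \<Rightarrow> nat \<Rightarrow> (coord \<Rightarrow> real) \<Rightarrow> real" where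
  "stopped_exp_loss R u c 0 x = 1"
| "stopped_exp_loss R u c (Suc N) x =
     (if \<forall>k\<in>{1..N}. weighted_loss c k x \<le> u then exp (R * weighted_loss c (Suc N) x)
      else stopped_exp_loss R u c N x)"

lemma stopped_exp_loss_running:
  "\<forall>k\<in>{1..N}. weighted_loss c k x \<le> u \<Longrightarrow> stopped_exp_loss R u c N x = exp (R * weighted_loss c N x)"
  by (cases N) auto

lemma stopped_exp_loss_ge:
  assumes "0 \<le> R" and "\<exists>k\<in>{1..N}. u < weighted_loss c k x"
  shows "exp (R * u) \<le> stopped_exp_loss R u c N x"
  using assms(2)
proof (induction N)
  case (Suc N)
  show ?case
  proof (cases "\<forall>k\<in>{1..N}. weighted_loss c k x \<le> u")
    case True
    with Suc.prems have "u < weighted_loss c (Suc N) x"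
      by (metis atLeastAtMost_iff le_Suc_eq linorder_not_le)
    with True assms(1) show ?thesis
      by (simp add: mult_left_mono)
  next
    case False
    then show ?thesis
      using Suc.IH by (auto simp: not_le)
  qed
qed simp

context
  fixes c assumes c: "predictable_weights c"
begin

lemma predictable_weight_restrict:
  assumes "n \<le> N"
  shows "c (Suc n) (restrict x (past_coords N)) = c (Suc n) x"
proof -
  have "c (Suc n) (restrict x (past_coords N)) = c (Suc n) (restrict x (past_coords n))"
    using c past_coords_mono[OF assms] unfolding predictable_weights_def
    by (metis Int_absorb1 restrict_restrict)
  also have "\<dots> = c (Suc n) x"
    using c unfolding predictable_weights_def by blast
  finally show ?thesis .
qed

lemma predictable_weight_bounds: "0 \<le> c (Suc n) x" "c (Suc n) x \<le> 1"
  using c unfolding predictable_weights_def by blast+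

lemma measurable_predictable_weight:
  assumes "n \<le> N"
  shows "c (Suc n) \<in> borel_measurable (PiM (past_coords N) (\<lambda>_. borel))"
proof -
  have "(\<lambda>x. c (Suc n) (restrict x (past_coords n))) \<in> borel_measurable (PiM (past_coords N) (\<lambda>_. borel))"
    using c past_coords_mono[OF assms] unfolding predictable_weights_def
    by (intro measurable_compose[OF measurable_restrict_subset]) auto
  then show ?thesis
    using c unfolding predictable_weights_def by simp
qed

lemma weighted_loss_restrict:
  "n \<le> N \<Longrightarrow> weighted_loss c n (restrict x (past_coords N)) = weighted_loss c n x"
  by (induction n) (simp_all add: weighted_loss_Suc predictable_weight_restrict net_loss_restrict)

lemma measurable_weighted_loss:
  "n \<le> N \<Longrightarrow> weighted_loss c n \<in> borel_measurable (PiM (past_coords N) (\<lambda>_. borel))"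
proof (induction n)
  case (Suc n)
  have [measurable]: "c (Suc n) \<in> borel_measurable (PiM (past_coords N) (\<lambda>_. borel))"
    using Suc.prems by (intro measurable_predictable_weight) simp
  have [measurable]: "weighted_loss c n \<in> borel_measurable (PiM (past_coords N) (\<lambda>_. borel))"
    using Suc by simp
  show ?case
    unfolding weighted_loss_Suc[abs_def] by measurable
qed (simp add: weighted_loss_def[abs_def])

lemma pred_weighted_loss_le:
  assumes "N \<le> M"
  shows "Measurable.pred (PiM (past_coords M) (\<lambda>_. borel)) (\<lambda>x. \<forall>k\<in>{1..N}. weighted_loss c k x \<le> u)"
proof (intro pred_intros_finite)
  fix k assume "k \<in> {1..N}"
  then have [measurable]: "weighted_loss c k \<in> borel_measurable (PiM (past_coords M) (\<lambda>_. borel))"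
    using assms by (intro measurable_weighted_loss) auto
  show "Measurable.pred (PiM (past_coords M) (\<lambda>_. borel)) (\<lambda>x. weighted_loss c k x \<le> u)"
    by measurable
qed simp

lemma stopped_exp_loss_restrict:
  "N \<le> M \<Longrightarrow> stopped_exp_loss R u c N (restrict x (past_coords M)) = stopped_exp_loss R u c N x"
  by (induction N) (simp_all add: weighted_loss_restrict)

lemma measurable_stopped_exp_loss:
  "N \<le> M \<Longrightarrow> stopped_exp_loss R u c N \<in> borel_measurable (PiM (past_coords M) (\<lambda>_. borel))"
proof (induction N)
  case (Suc N)
  have [measurable]: "weighted_loss c (Suc N) \<in> borel_measurable (PiM (past_coords M) (\<lambda>_. borel))"
    "Measurable.pred (PiM (past_coords M) (\<lambda>_. borel)) (\<lambda>x. \<forall>k\<in>{1..N}. weighted_loss c k x \<le> u)"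
    "stopped_exp_loss R u c N \<in> borel_measurable (PiM (past_coords M) (\<lambda>_. borel))"
    using Suc measurable_weighted_loss pred_weighted_loss_le by simp_all
  show ?case
    by (subst stopped_exp_loss.simps(2)[abs_def]) measurable
qed (simp add: stopped_exp_loss.simps(1)[abs_def])

end

section \<open>The risk model\<close>

locale interest_risk_model = prob_space M for M :: "'a measure" +
  fixes X Y I :: "nat \<Rightarrow> 'a \<Rightarrow> real" and R :: real
  assumes indep: "indep_vars (\<lambda>_. borel) (case_sum X (case_sum Y I)) all_coords"
    and interest_nonneg: "\<And>n \<omega>. 1 \<le> n \<Longrightarrow> \<omega> \<in> space M \<Longrightarrow> 0 \<le> I n \<omega>"
    and R_nonneg: "0 \<le> R"
    and exp_net_loss_le_1: "\<And>n. 1 \<le> n \<Longrightarrow> (\<integral>\<^sup>+\<omega>. ennreal (exp (R * (Y n \<omega> - X n \<omega>))) \<partial>M) \<le> 1"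
begin

definition sample :: "'a \<Rightarrow> coord \<Rightarrow> real" where
  "sample \<omega> i = case_sum X (case_sum Y I) i \<omega>"

definition history :: "nat \<Rightarrow> 'a \<Rightarrow> coord \<Rightarrow> real" where
  "history n \<omega> = restrict (sample \<omega>) (past_coords n)"

lemma measurable_sample_coord: "i \<in> all_coords \<Longrightarrow> (\<lambda>\<omega>. sample \<omega> i) \<in> borel_measurable M"
  using indep unfolding indep_vars_def sample_def by auto

lemma measurable_history [measurable]: "history n \<in> measurable M (PiM (past_coords n) (\<lambda>_. borel))"
  unfolding history_def
  using measurable_sample_coord past_coords_subset_all by (auto intro!: measurable_restrict)

lemma net_loss_sample: "net_loss n (sample \<omega>) = Y n \<omega> - X n \<omega>"
  by (simp add: net_loss_def sample_def)

lemma measurable_net_loss_sample: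
  "1 \<le> n \<Longrightarrow> (\<lambda>\<omega>. Y n \<omega> - X n \<omega>) \<in> borel_measurable M"
  using measurable_sample_coord[of "Inl n"] measurable_sample_coord[of "Inr (Inl n)"]
  by (auto simp: all_coords_def sample_def)

lemma nn_integral_exp_step_le:
  assumes [measurable]: "f \<in> borel_measurable (PiM (past_coords N) (\<lambda>_. borel))"
      "g \<in> borel_measurable (PiM (past_coords N) (\<lambda>_. borel))"
    and g: "\<And>x. 0 \<le> g x" "\<And>x. g x \<le> 1"
  shows "(\<integral>\<^sup>+\<omega>. f (history N \<omega>) * ennreal (exp (R * g (history N \<omega>) * net_loss (Suc N) (sample \<omega>))) \<partial>M)
    \<le> (\<integral>\<^sup>+\<omega>. f (history N \<omega>) \<partial>M)"
proof -
  define step where "step \<omega> = restrict (sample \<omega>) (step_coords (Suc N))" for \<omega>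
  have indep_step: "indep_var (PiM (past_coords N) (\<lambda>_. borel)) (history N)
      (PiM (step_coords (Suc N)) (\<lambda>_. borel)) step"
    unfolding history_def[abs_def] step_def[abs_def] sample_def
    by (rule indep_var_restrict[OF indep past_coords_disjoint_step_coords past_coords_subset_all
        step_coords_subset_all]) simp
  have step_loss: "net_loss (Suc N) (step \<omega>) = net_loss (Suc N) (sample \<omega>)" for \<omega>
    by (simp add: step_def step_coords_def net_loss_def)
  have "(\<integral>\<^sup>+\<omega>. f (history N \<omega>) * ennreal (exp (R * g (history N \<omega>) * net_loss (Suc N) (sample \<omega>))) \<partial>M)
    = (\<integral>\<^sup>+\<omega>. \<integral>\<^sup>+\<omega>'. f (history N \<omega>) * ennreal (exp (R * g (history N \<omega>) * net_loss (Suc N) (step \<omega>'))) \<partial>M \<partial>M)"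
    using nn_integral_indep_var[OF indep_step,
        of "\<lambda>(v, w). f v * ennreal (exp (R * g v * net_loss (Suc N) w))"]
    by (simp add: step_loss)
  also have "\<dots> \<le> (\<integral>\<^sup>+\<omega>. f (history N \<omega>) \<partial>M)"
  proof (intro nn_integral_mono)
    fix \<omega>
    have [measurable]: "(\<lambda>\<omega>. Y (Suc N) \<omega> - X (Suc N) \<omega>) \<in> borel_measurable M"
      by (rule measurable_net_loss_sample) simp
    have "(\<integral>\<^sup>+\<omega>'. f (history N \<omega>) * ennreal (exp (R * g (history N \<omega>) * net_loss (Suc N) (step \<omega>'))) \<partial>M)
        = f (history N \<omega>) * (\<integral>\<^sup>+\<omega>'. ennreal (exp (g (history N \<omega>) * (R * (Y (Suc N) \<omega>' - X (Suc N) \<omega>')))) \<partial>M)"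
      by (simp add: step_loss net_loss_sample ac_simps nn_integral_cmult)
    also have "\<dots> \<le> f (history N \<omega>) * 1"
      using exp_net_loss_le_1[of "Suc N"] g
      by (intro mult_left_mono nn_integral_exp_scaled_le_1[where W = "\<lambda>\<omega>'. R * (Y (Suc N) \<omega>' - X (Suc N) \<omega>')"]) auto
    finally show "(\<integral>\<^sup>+\<omega>'. f (history N \<omega>) * ennreal (exp (R * g (history N \<omega>) * net_loss (Suc N) (step \<omega>'))) \<partial>M)
        \<le> f (history N \<omega>)"
      by simp
  qed
  finally show ?thesis .
qed


lemma weighted_loss_history:
  "predictable_weights c \<Longrightarrow> n \<le> N \<Longrightarrow> weighted_loss c n (history N \<omega>) = weighted_loss c n (sample \<omega>)"
  by (simp add: history_def weighted_loss_restrict)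

lemma measurable_weighted_loss_sample:
  assumes "predictable_weights c"
  shows "(\<lambda>\<omega>. weighted_loss c n (sample \<omega>)) \<in> borel_measurable M"
proof -
  have "(\<lambda>\<omega>. weighted_loss c n (history n \<omega>)) \<in> borel_measurable M"
    using measurable_weighted_loss[OF assms order_refl] by measurable
  then show ?thesis
    by (simp add: weighted_loss_history[OF assms])
qed

lemma nn_integral_exp_weighted_loss_Suc_le:
  assumes c: "predictable_weights c"
    and [measurable]: "f \<in> borel_measurable (PiM (past_coords n) (\<lambda>_. borel))"
  shows "(\<integral>\<^sup>+\<omega>. f (history n \<omega>) * ennreal (exp (R * weighted_loss c (Suc n) (sample \<omega>))) \<partial>M)
    \<le> (\<integral>\<^sup>+\<omega>. f (history n \<omega>) * ennreal (exp (R * weighted_loss c n (sample \<omega>))) \<partial>M)"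
proof -
  have [measurable]: "weighted_loss c n \<in> borel_measurable (PiM (past_coords n) (\<lambda>_. borel))"
      "c (Suc n) \<in> borel_measurable (PiM (past_coords n) (\<lambda>_. borel))"
    by (simp_all add: measurable_weighted_loss[OF c] measurable_predictable_weight[OF c])
  have "c (Suc n) (history n \<omega>) = c (Suc n) (sample \<omega>)" for \<omega>
    by (simp add: history_def predictable_weight_restrict[OF c])
  then have "(\<integral>\<^sup>+\<omega>. f (history n \<omega>) * ennreal (exp (R * weighted_loss c (Suc n) (sample \<omega>))) \<partial>M)
    = (\<integral>\<^sup>+\<omega>. f (history n \<omega>) * ennreal (exp (R * weighted_loss c n (history n \<omega>))) *
         ennreal (exp (R * c (Suc n) (history n \<omega>) * net_loss (Suc n) (sample \<omega>))) \<partial>M)"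
    by (simp add: weighted_loss_Suc weighted_loss_history[OF c] distrib_left exp_add
        ennreal_mult'[symmetric] mult.assoc)
  also have "\<dots> \<le> (\<integral>\<^sup>+\<omega>. f (history n \<omega>) * ennreal (exp (R * weighted_loss c n (history n \<omega>))) \<partial>M)"
    by (rule nn_integral_exp_step_le[where f = "\<lambda>x. f x * ennreal (exp (R * weighted_loss c n x))"])
      (simp_all add: predictable_weight_bounds[OF c])
  finally show ?thesis
    by (simp add: weighted_loss_history[OF c])
qed

lemma nn_integral_exp_weighted_loss_le_1:
  assumes c: "predictable_weights c"
  shows "(\<integral>\<^sup>+\<omega>. ennreal (exp (R * weighted_loss c n (sample \<omega>))) \<partial>M) \<le> 1"
proof (induction n)
  case (Suc n)
  with nn_integral_exp_weighted_loss_Suc_le[OF c, of "\<lambda>_. 1" n] show ?case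
    by simp
qed (simp add: emeasure_space_1)

lemma nn_integral_stopped_exp_loss_le_1:
  assumes c: "predictable_weights c"
  shows "(\<integral>\<^sup>+\<omega>. ennreal (stopped_exp_loss R u c N (sample \<omega>)) \<partial>M) \<le> 1"
proof (induction N)
  case (Suc N)
  let ?running = "\<lambda>x. \<forall>k\<in>{1..N}. weighted_loss c k x \<le> u"
  define f :: "(coord \<Rightarrow> real) \<Rightarrow> ennreal" where "f x = (if ?running x then 1 else 0)" for x
  define g where "g x = ennreal (if ?running x then 0 else stopped_exp_loss R u c N x)" for x
  have [measurable]: "Measurable.pred (PiM (past_coords N) (\<lambda>_. borel)) ?running"
      "stopped_exp_loss R u c N \<in> borel_measurable (PiM (past_coords N) (\<lambda>_. borel))"
    using pred_weighted_loss_le[OF c order_refl] measurable_stopped_exp_loss[OF c order_refl] .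
  have [measurable]: "f \<in> borel_measurable (PiM (past_coords N) (\<lambda>_. borel))"
      "g \<in> borel_measurable (PiM (past_coords N) (\<lambda>_. borel))"
    unfolding f_def g_def by measurable
  have [measurable]: "(\<lambda>\<omega>. weighted_loss c n (sample \<omega>)) \<in> borel_measurable M" for n
    by (rule measurable_weighted_loss_sample[OF c])
  have running_history: "?running (history N \<omega>) = ?running (sample \<omega>)" for \<omega>
    by (simp add: weighted_loss_history[OF c])
  have stopped_history: "stopped_exp_loss R u c N (history N \<omega>) = stopped_exp_loss R u c N (sample \<omega>)" for \<omega>
    by (simp add: history_def stopped_exp_loss_restrict[OF c])
  have "(\<integral>\<^sup>+\<omega>. ennreal (stopped_exp_loss R u c (Suc N) (sample \<omega>)) \<partial>M)
    = (\<integral>\<^sup>+\<omega>. f (history N \<omega>) * ennreal (exp (R * weighted_loss c (Suc N) (sample \<omega>))) + g (history N \<omega>) \<partial>M)"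
    unfolding f_def g_def running_history stopped_history by (intro nn_integral_cong) simp
  also have "\<dots> = (\<integral>\<^sup>+\<omega>. f (history N \<omega>) * ennreal (exp (R * weighted_loss c (Suc N) (sample \<omega>))) \<partial>M)
      + (\<integral>\<^sup>+\<omega>. g (history N \<omega>) \<partial>M)"
    by (rule nn_integral_add) measurable
  also have "\<dots> \<le> (\<integral>\<^sup>+\<omega>. f (history N \<omega>) * ennreal (exp (R * weighted_loss c N (sample \<omega>))) \<partial>M)
      + (\<integral>\<^sup>+\<omega>. g (history N \<omega>) \<partial>M)"
    by (intro add_right_mono nn_integral_exp_weighted_loss_Suc_le c) measurable
  also have "\<dots> = (\<integral>\<^sup>+\<omega>. f (history N \<omega>) * ennreal (exp (R * weighted_loss c N (sample \<omega>))) + g (history N \<omega>) \<partial>M)"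
    by (rule nn_integral_add[symmetric]) measurable
  also have "\<dots> = (\<integral>\<^sup>+\<omega>. ennreal (stopped_exp_loss R u c N (sample \<omega>)) \<partial>M)"
    unfolding f_def g_def running_history stopped_history
    by (intro nn_integral_cong) (simp add: stopped_exp_loss_running)
  finally show ?case
    using Suc by simp
qed (simp add: emeasure_space_1)

lemma prob_exceeds_weighted_loss_le:
  assumes c: "predictable_weights c"
  shows "measure M {\<omega> \<in> space M. \<exists>k\<in>{1..N}. u < weighted_loss c k (sample \<omega>)} \<le> exp (- R * u)"
proof -
  let ?B = "{\<omega> \<in> space M. \<exists>k\<in>{1..N}. u < weighted_loss c k (sample \<omega>)}"
  have [measurable]: "(\<lambda>\<omega>. weighted_loss c k (sample \<omega>)) \<in> borel_measurable M" for k
    by (rule measurable_weighted_loss_sample[OF c])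
  have "ennreal (exp (R * u) * measure M ?B) = (\<integral>\<^sup>+\<omega>. ennreal (exp (R * u)) * indicator ?B \<omega> \<partial>M)"
    by (simp add: nn_integral_cmult_indicator emeasure_eq_measure ennreal_mult')
  also have "\<dots> \<le> (\<integral>\<^sup>+\<omega>. ennreal (stopped_exp_loss R u c N (sample \<omega>)) \<partial>M)"
    using R_nonneg
    by (intro nn_integral_mono) (auto simp: indicator_def intro!: ennreal_leI stopped_exp_loss_ge)
  also have "\<dots> \<le> 1"
    by (rule nn_integral_stopped_exp_loss_le_1[OF c])
  finally have "exp (R * u) * measure M ?B \<le> 1"
    by simp
  then show ?thesis
    by (simp add: exp_minus field_simps)
qed

lemma surplus_mult_discount:
  assumes "\<omega> \<in> space M"
  shows "surplus u X Y I n \<omega> * discount n (sample \<omega>) = u - weighted_loss discount n (sample \<omega>)"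
proof (induction n)
  case (Suc n)
  have "0 \<le> I (Suc n) \<omega>"
    using interest_nonneg[OF _ assms] by simp
  then have "discount n (sample \<omega>) = discount (Suc n) (sample \<omega>) * (1 + I (Suc n) \<omega>)"
    by (simp add: discount_Suc sample_def max_def field_simps)
  then have "surplus u X Y I (Suc n) \<omega> * discount (Suc n) (sample \<omega>)
      = surplus u X Y I n \<omega> * discount n (sample \<omega>) - discount (Suc n) (sample \<omega>) * (Y (Suc n) \<omega> - X (Suc n) \<omega>)"
    by (simp add: algebra_simps)
  then show ?case
    using Suc by (simp add: weighted_loss_Suc net_loss_sample)
qed (simp add: discount_def)

lemma surplus_neg_iff:
  assumes "\<omega> \<in> space M"
  shows "surplus u X Y I n \<omega> < 0 \<longleftrightarrow> u < weighted_loss discount n (sample \<omega>)"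
proof -
  have "surplus u X Y I n \<omega> < 0 \<longleftrightarrow> surplus u X Y I n \<omega> * discount n (sample \<omega>) < 0"
    using discount_pos[of n "sample \<omega>"] by (simp add: mult_less_0_iff)
  then show ?thesis
    by (simp add: surplus_mult_discount[OF assms])
qed

lemma ruin_prob_le: "ruin_prob M X Y I u \<le> exp (- R * u)"
proof -
  define B where "B N = {\<omega> \<in> space M. \<exists>k\<in>{1..N}. u < weighted_loss discount k (sample \<omega>)}" for N
  have [measurable]: "(\<lambda>\<omega>. weighted_loss discount k (sample \<omega>)) \<in> borel_measurable M" for k
    by (rule measurable_weighted_loss_sample[OF predictable_weights_discount])
  have "(\<Union>n\<in>{1..}. {\<omega> \<in> space M. surplus u X Y I n \<omega> < 0})
      = (\<Union>n\<in>{1..}. {\<omega> \<in> space M. u < weighted_loss discount n (sample \<omega>)})"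
    using surplus_neg_iff by blast
  also have "\<dots> = (\<Union>N. B N)"
    unfolding B_def by force
  finally have ruin_eq: "(\<Union>n\<in>{1..}. {\<omega> \<in> space M. surplus u X Y I n \<omega> < 0}) = (\<Union>N. B N)" .
  have "(\<lambda>N. measure M (B N)) \<longlonglongrightarrow> measure M (\<Union>N. B N)"
    by (rule finite_Lim_measure_incseq) (auto simp: B_def incseq_def)
  then have "measure M (\<Union>N. B N) \<le> exp (- R * u)"
    by (rule LIMSEQ_le_const2)
      (use prob_exceeds_weighted_loss_le[OF predictable_weights_discount] in \<open>auto simp: B_def\<close>)
  then show ?thesis
    unfolding ruin_prob_def ruin_eq .
qed


abbreviation Z :: "nat \<Rightarrow> 'a \<Rightarrow> real" where
  "Z n \<omega> \<equiv> exp (R * disc_loss X Y I n \<omega>)"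

lemma disc_loss_eq_weighted_loss:
  assumes "\<omega> \<in> space M"
  shows "disc_loss X Y I n \<omega> = weighted_loss prev_discount n (sample \<omega>)"
  unfolding disc_loss_def weighted_loss_def
proof (intro sum.cong refl)
  fix i assume "i \<in> {1..n}"
  then have "{1..<i} = {1..i - 1}"
    by auto
  then show "(Y i \<omega> - X i \<omega>) * (\<Prod>j\<in>{1..<i}. inverse (1 + I j \<omega>))
      = prev_discount i (sample \<omega>) * net_loss i (sample \<omega>)"
    using interest_nonneg[OF _ assms]
    by (auto simp: prev_discount_def discount_def net_loss_sample sample_def intro!: prod.cong)
qed

lemma Z_history:
  "n \<le> N \<Longrightarrow> \<omega> \<in> space M \<Longrightarrow> Z n \<omega> = exp (R * weighted_loss prev_discount n (history N \<omega>))"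
  using weighted_loss_history[OF predictable_weights_prev_discount, of n N \<omega>]
  by (simp add: disc_loss_eq_weighted_loss)

lemma measurable_Z: "Z n \<in> borel_measurable M"
proof -
  have [measurable]: "weighted_loss prev_discount n \<in> borel_measurable (PiM (past_coords n) (\<lambda>_. borel))"
    by (rule measurable_weighted_loss[OF predictable_weights_prev_discount order_refl])
  have "(\<lambda>\<omega>. exp (R * weighted_loss prev_discount n (history n \<omega>))) \<in> borel_measurable M"
    by measurable
  then show ?thesis
    by (rule measurable_cong[THEN iffD1, rotated]) (simp add: Z_history[OF order_refl])
qed

lemma integrable_Z: "integrable M (Z n)"
proof (rule integrableI_nonneg)
  have "(\<integral>\<^sup>+\<omega>. ennreal (Z n \<omega>) \<partial>M) = (\<integral>\<^sup>+\<omega>. ennreal (exp (R * weighted_loss prev_discount n (sample \<omega>))) \<partial>M)"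
    by (intro nn_integral_cong) (simp add: disc_loss_eq_weighted_loss)
  also have "\<dots> \<le> 1"
    by (rule nn_integral_exp_weighted_loss_le_1[OF predictable_weights_prev_discount])
  finally show "(\<integral>\<^sup>+\<omega>. ennreal (Z n \<omega>) \<partial>M) < \<infinity>"
    by (simp add: order_le_less_trans)
qed (simp_all add: measurable_Z)

lemma set_integral_Z_Suc_le:
  assumes A: "A \<in> sets (natural_filtration M Z n)"
  shows "(\<integral>\<omega>\<in>A. Z (Suc n) \<omega> \<partial>M) \<le> (\<integral>\<omega>\<in>A. Z n \<omega> \<partial>M)"
proof -
  obtain B where [measurable]: "B \<in> sets (PiM (past_coords n) (\<lambda>_. borel))"
    and A_eq: "A = history n -` B \<inter> space M"
  proof (rule sets_natural_filtration_vimage[OF measurable_history _ _ A])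
    show "(\<lambda>x. exp (R * weighted_loss prev_discount i x)) \<in> borel_measurable (PiM (past_coords n) (\<lambda>_. borel))"
      if "1 \<le> i" "i \<le> n" for i
      using measurable_weighted_loss[OF predictable_weights_prev_discount \<open>i \<le> n\<close>] by measurable
    show "Z i \<omega> = exp (R * weighted_loss prev_discount i (history n \<omega>))"
      if "1 \<le> i" "i \<le> n" "\<omega> \<in> space M" for i \<omega>
      using Z_history[OF that(2,3)] .
  qed
  have [measurable]: "A \<in> sets M"
    unfolding A_eq by measurable
  have set_nn_integral_Z: "(\<integral>\<^sup>+\<omega>\<in>A. Z m \<omega> \<partial>M)
      = (\<integral>\<^sup>+\<omega>. indicator B (history n \<omega>) * ennreal (exp (R * weighted_loss prev_discount m (sample \<omega>))) \<partial>M)" for m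
    by (intro nn_integral_cong) (auto simp: A_eq indicator_def disc_loss_eq_weighted_loss)
  have "ennreal (\<integral>\<omega>\<in>A. Z (Suc n) \<omega> \<partial>M) = (\<integral>\<^sup>+\<omega>\<in>A. Z (Suc n) \<omega> \<partial>M)"
    by (rule nn_set_integral_eq_set_integral[symmetric]) (simp_all add: integrable_Z)
  also have "\<dots> \<le> (\<integral>\<^sup>+\<omega>\<in>A. Z n \<omega> \<partial>M)"
    unfolding set_nn_integral_Z
    by (rule nn_integral_exp_weighted_loss_Suc_le[OF predictable_weights_prev_discount]) measurable
  also have "\<dots> = ennreal (\<integral>\<omega>\<in>A. Z n \<omega> \<partial>M)"
    by (rule nn_set_integral_eq_set_integral) (simp_all add: integrable_Z)
  finally show ?thesis
    by (simp add: set_lebesgue_integral_def)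
qed

theorem supermartingale_Z: "supermartingale M Z"
  unfolding supermartingale_def
proof (intro conjI allI impI)
  fix n :: nat assume "1 \<le> n"
  interpret F: sigma_finite_subalgebra M "natural_filtration M Z n"
  proof (rule finite_measure_subalgebra_is_sigma_finite)
    show "finite_measure_subalgebra M (natural_filtration M Z n)"
      by unfold_locales (simp_all add: subalgebra_natural_filtration measurable_Z)
  qed
  show "AE \<omega> in M. real_cond_exp M (natural_filtration M Z n) (Z (Suc n)) \<omega> \<le> Z n \<omega>"
    using \<open>1 \<le> n\<close>
    by (intro F.real_cond_exp_le_of_set_integral_le integrable_Z measurable_natural_filtration
        set_integral_Z_Suc_le)
qed (simp_all add: measurable_Z integrable_Z)

end

theorem lemma2p5:
  fixes M :: "'a measure"
    and X Y I :: "nat \<Rightarrow> 'a \<Rightarrow> real"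
    and R :: real
  assumes "prob_space M"
    and indep: "prob_space.indep_vars M (\<lambda>_. borel)
                  (case_sum X (case_sum Y I)) ({Inl n | n. n \<ge> 1} \<union> {Inr (Inl n) | n. n \<ge> 1} \<union> {Inr (Inr n) | n. n \<ge> 1})"
    and rvX: "\<And>n. n \<ge> 1 \<Longrightarrow> X n \<in> borel_measurable M"
    and rvY: "\<And>n. n \<ge> 1 \<Longrightarrow> Y n \<in> borel_measurable M"
    and rvI: "\<And>n. n \<ge> 1 \<Longrightarrow> I n \<in> borel_measurable M"
    and idX: "\<And>n. n \<ge> 1 \<Longrightarrow> distr M borel (X n) = distr M borel (X 1)"
    and idY: "\<And>n. n \<ge> 1 \<Longrightarrow> distr M borel (Y n) = distr M borel (Y 1)"
    and idI: "\<And>n. n \<ge> 1 \<Longrightarrow> distr M borel (I n) = distr M borel (I 1)"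
    and nnX: "\<And>n \<omega>. n \<ge> 1 \<Longrightarrow> \<omega> \<in> space M \<Longrightarrow> X n \<omega> \<ge> 0"
    and nnY: "\<And>n \<omega>. n \<ge> 1 \<Longrightarrow> \<omega> \<in> space M \<Longrightarrow> Y n \<omega> \<ge> 0"
    and nnI: "\<And>n \<omega>. n \<ge> 1 \<Longrightarrow> \<omega> \<in> space M \<Longrightarrow> I n \<omega> \<ge> 0"
    and intX: "\<And>n. n \<ge> 1 \<Longrightarrow> integrable M (X n)"
    and intY: "\<And>n. n \<ge> 1 \<Longrightarrow> integrable M (Y n)"
    and intI: "\<And>n. n \<ge> 1 \<Longrightarrow> integrable M (I n)"
    and Rpos: "R > 0"
    and Rexp: "(\<integral>\<^sup>+ \<omega>. ennreal (exp (R * (Y 1 \<omega> - X 1 \<omega>))) \<partial>M) \<le> 1"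
  shows "supermartingale M (\<lambda>n \<omega>. exp (R * disc_loss X Y I n \<omega>))
         \<and> (\<forall>u>0. ruin_prob M X Y I u \<le> exp (- R * u))"
proof -
  interpret prob_space M by fact
  have indep: "indep_vars (\<lambda>_. borel) (case_sum X (case_sum Y I)) all_coords"
    using indep unfolding all_coords_def .
  have "(\<integral>\<^sup>+\<omega>. ennreal (exp (R * (Y n \<omega> - X n \<omega>))) \<partial>M) \<le> 1" if "1 \<le> n" for n
  proof -
    have "(\<integral>\<^sup>+\<omega>. ennreal (exp (R * (Y n \<omega> - X n \<omega>))) \<partial>M)
        = (\<integral>\<^sup>+\<omega>. ennreal (exp (R * (Y 1 \<omega> - X 1 \<omega>))) \<partial>M)"
      using nn_integral_indep_var_cong[OF indep_var_premium_claim[OF indep that]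
          indep_var_premium_claim[OF indep order_refl] idX[OF that] idY[OF that],
          of "\<lambda>(x, y). ennreal (exp (R * (y - x)))"]
      by simp
    with Rexp show ?thesis
      by simp
  qed
  then interpret interest_risk_model M X Y I R
    using indep nnI Rpos by unfold_locales auto
  show ?thesis
    using supermartingale_Z ruin_prob_le by blast
qed

end
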